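(* Fix a positive integer $m$. Let $f:D\to S^3_1$ be a CMC $1$ face with Weierstrass data $(g,\omega)$, $p\in\Sigma(f)$ a non-degenerate singular point, and $(\tilde g,\tilde\omega)$ equivalent Weierstrass data ($\tilde g=\frac{ag+b}{\bar bg+\bar a}$, $\tilde\omega=(\bar bg+\bar a)^2\omega$, $|a|^2-|b|^2=1$), with characteristic pairs $(\varphi,V)$, $(\tilde\varphi,\tilde V)$. Write $i=\sqrt{-1}$. (1) If $\operatorname{Re}(i^kV^k\varphi)(p)=0$ for $k=0,\dots,m-1$, then $|ag(p)+b|^{2(m-2)}\operatorname{Re}(i^mV^m\varphi)(p)=\operatorname{Re}(i^m\tilde V^m\tilde\varphi)(p)$. In particular, [for all such data] one has $\operatorname{Re}(i^mV^m\varphi)(p)=\operatorname{Re}(i^m\tilde V^m\tilde\varphi)(p)$ under these hypotheses if and only if $m=2$. (2) If $\operatorname{Im}(i^kV^k\varphi)(p)=0$ for $k=0,\dots,m-1$, then $|ag(p)+b|^{2(m-2)}\operatorname{Im}(i^mV^m\varphi)(p)=\operatorname{Im}(i^m\tilde V^m\tilde\varphi)(p)$; in particular the equality $\operatorname{Im}(i^mV^m\varphi)(p)=\operatorname{Im}(i^m\tilde V^m\tilde\varphi)(p)$ holds [for all equivalent data] under these hypotheses if and only if $m=2$. Consequently, at a non-degenerate singular point with $\operatorname{Im}\varphi(p)=\operatorname{Re}V\varphi(p)=0$ the quantity $\alpha(f,p):=\operatorname{Im}V^2\varphi(p)$, and at one with $\operatorname{Re}\varphi(p)=\operatorname{Im}V\varphi(p)=0$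 the quantity $\sigma(f,p):=\operatorname{Re}V^2\varphi(p)$, do not depend on the choice of Weierstrass data.
   Context: $S^3_1=\{X\in\mathrm{Herm}(2):\det X=-1\}$. A CMC $1$ face with Weierstrass data $(g,\omega)$ ($g$ meromorphic, $\omega=h\,dz$ holomorphic on a domain $D\subset\mathbb{C}$, $(1+|g|^2)^2|\omega|^2$ Riemannian, $1-|g|^2\not\equiv0$) is $f=Fe_3F^*$ with $F:D\to SL(2,\mathbb{C})$ holomorphic, $F^{-1}dF=\begin{pmatrix}g&-g^2\\1&-g\end{pmatrix}\omega$, $e_3=\mathrm{diag}(1,-1)$. Equivalent Weierstrass data (related as in the claim) describe the same face up to congruence. Singular set $\Sigma(f)=\{|g|=1\}$; non-degenerate means $dg(p)\neq0$. Characteristic pair: $\varphi=dg/(g^2\omega)$, $V=g\,d/dg$ ($V\psi=g\psi_z/g_z$), iterates $V^k$. *)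

theory Defs
  imports "HOL-Complex_Analysis.Complex_Analysis"
begin

text \<open>Weierstrass data (g, omega = h dz) on a domain D.  The meromorphic function g
  is represented by a function that is analytic at every point of D except its poles.\<close>

definition weier_matrix :: "(complex \<Rightarrow> complex) \<Rightarrow> (complex \<Rightarrow> complex) \<Rightarrow> complex \<Rightarrow> complex^2^2" where
  "weier_matrix g h z =
     (\<chi> i j. h z * (if i = 1 then (if j = 1 then g z else - (g z * g z))
                              else (if j = 1 then 1 else - g z)))"

text \<open>(g, h dz) is the Weierstrass data of a CMC 1 face f = F e3 F^* on D:
  D is a domain, g meromorphic, h holomorphic, the metric (1+|g|^2)^2 |h|^2 |dz|^2
  is Riemannian, 1 - |g|^2 is not identically zero, and a holomorphic
  F : D \<rightarrow> SL(2,C) with F^{-1} dF = [[g,-g^2],[1,-g]] h dz exists.\<close>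

definition cmc1_face_data :: "complex set \<Rightarrow> (complex \<Rightarrow> complex) \<Rightarrow> (complex \<Rightarrow> complex) \<Rightarrow> bool" where
  "cmc1_face_data D g h \<longleftrightarrow>
     open D \<and> connected D \<and> D \<noteq> {} \<and>
     g meromorphic_on D \<and> (\<forall>z\<in>D. g analytic_on {z} \<or> is_pole g z) \<and>
     h holomorphic_on D \<and>
     (\<forall>z\<in>D. g analytic_on {z} \<longrightarrow> h z \<noteq> 0) \<and>
     (\<forall>z\<in>D. is_pole g z \<longrightarrow> zorder h z = - 2 * zorder g z) \<and>
     (\<exists>z\<in>D. is_pole g z \<or> cmod (g z) \<noteq> 1) \<and>
     (\<exists>F :: complex \<Rightarrow> complex^2^2.
        (\<forall>z\<in>D. det (F z) = 1) \<and>
        (\<forall>i j. (\<lambda>w. F w $ i $ j) holomorphic_on D) \<and>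
        (\<forall>z\<in>D. g analytic_on {z} \<longrightarrow>
           (\<forall>i j. ((\<lambda>w. F w $ i $ j) has_field_derivative
                      (F z ** weier_matrix g h z) $ i $ j) (at z))))"

text \<open>Non-degenerate singular point: p in Sigma(f) = {|g| = 1} and dg(p) \<noteq> 0.\<close>

definition nondeg_singular_point :: "complex set \<Rightarrow> (complex \<Rightarrow> complex) \<Rightarrow> complex \<Rightarrow> bool" where
  "nondeg_singular_point D g p \<longleftrightarrow>
     p \<in> D \<and> g analytic_on {p} \<and> cmod (g p) = 1 \<and> deriv g p \<noteq> 0"

definition equiv_g :: "complex \<Rightarrow> complex \<Rightarrow> (complex \<Rightarrow> complex) \<Rightarrow> complex \<Rightarrow> complex" where
  "equiv_g a b g z = (a * g z + b) / (cnj b * g z + cnj a)"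

definition equiv_h :: "complex \<Rightarrow> complex \<Rightarrow> (complex \<Rightarrow> complex) \<Rightarrow> (complex \<Rightarrow> complex) \<Rightarrow> complex \<Rightarrow> complex" where
  "equiv_h a b g h z = (cnj b * g z + cnj a)^2 * h z"

definition char_phi :: "(complex \<Rightarrow> complex) \<Rightarrow> (complex \<Rightarrow> complex) \<Rightarrow> complex \<Rightarrow> complex" where
  "char_phi g h z = deriv g z / ((g z)^2 * h z)"

definition char_V :: "(complex \<Rightarrow> complex) \<Rightarrow> (complex \<Rightarrow> complex) \<Rightarrow> complex \<Rightarrow> complex" where
  "char_V g \<psi> z = g z * deriv \<psi> z / deriv g z"

definition char_iter :: "(complex \<Rightarrow> complex) \<Rightarrow> (complex \<Rightarrow> complex) \<Rightarrow> nat \<Rightarrow> complex \<Rightarrow> complex" where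
  "char_iter g h k z = \<i> ^ k * (((char_V g) ^^ k) (char_phi g h)) z"

end

theory Submission
  imports Defs
begin

text \<open>
  A change of Weierstrass data multiplies the operator \<open>i V\<close> by \<open>rho(g)\<close> and \<open>phi\<close> by
  \<open>rho(g)^-2\<close>, where \<open>rho(G) = (a G + b) (cnj b G + cnj a) / G\<close>. By the Leibniz rule the new
  iterate \<open>(i V)^n phi\<close> is then a combination of the old iterates \<open>(i V)^k phi\<close>, \<open>k \<le> n\<close>,
  with coefficients that are functions of \<open>g\<close> built from \<open>rho^-2\<close> by multiplication with
  \<open>rho\<close> and the angular derivative \<open>i G d/dG\<close>. Both operations preserve holomorphic functions
  that are real on the unit circle, and the leading coefficient is \<open>rho^(n-2)\<close>. At a singular
  point \<open>|g(p)| = 1\<close>, so all coefficients are real there and \<open>rho(g(p)) = |a g(p) + b|^2\<close>; if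
  the lower iterates have vanishing real (imaginary) part, only the leading term survives.

  For \<open>m \<noteq> 2\<close> the factor \<open>|a g(p) + b|^(2(m-2))\<close> is not always 1. The data \<open>g = e^z\<close>,
  \<open>omega = (x'' - x') / (e^z x) dz\<close> with \<open>x = e^(nu z) + gamma z^(m+2)\<close> have
  \<open>phi = x / (x'' - x') = 1 / (nu^2 - nu) + O(z^m)\<close>, so \<open>nu\<close> and \<open>gamma\<close> can be chosen such
  that the lower iterates at \<open>0\<close> have vanishing real (imaginary) part while the \<open>m\<close>-th does
  not; \<open>a = sqrt 2\<close>, \<open>b = 1\<close> then violates the invariance.
\<close>

section \<open>Weighted derivatives and functions real on the unit circle\<close>

definition weighted_deriv :: "(complex \<Rightarrow> complex) \<Rightarrow> (complex \<Rightarrow> complex) \<Rightarrow> complex \<Rightarrow> complex" where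
  "weighted_deriv A \<psi> z = A z * deriv \<psi> z"

lemma char_V_eq_weighted_deriv: "char_V g = weighted_deriv (\<lambda>z. g z / deriv g z)"
  by (intro ext) (simp add: char_V_def weighted_deriv_def)

lemma holomorphic_on_weighted_deriv_iterate:
  assumes "open U" "A holomorphic_on U" "\<psi> holomorphic_on U"
  shows "(weighted_deriv A ^^ k) \<psi> holomorphic_on U"
proof (induction k)
  case (Suc k)
  then show ?case
    unfolding funpow.simps comp_def weighted_deriv_def
    using assms(1,2) by (intro holomorphic_on_mult holomorphic_deriv) simp_all
qed (simp add: assms(3))

lemma weighted_deriv_cong_open:
  assumes "open U" "z \<in> U" "\<And>w. w \<in> U \<Longrightarrow> \<psi> w = \<theta> w"
  shows "weighted_deriv A \<psi> z = weighted_deriv A \<theta> z"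
proof -
  have "eventually (\<lambda>w. \<psi> w = \<theta> w) (nhds z)"
    using eventually_nhds_in_open[OF assms(1,2)] by (rule eventually_mono) (rule assms(3))
  then show ?thesis
    unfolding weighted_deriv_def by (simp add: deriv_cong_ev)
qed

lemma weighted_deriv_iterate_cmult:
  assumes "open U" "A holomorphic_on U" "\<psi> holomorphic_on U" "z \<in> U"
  shows "(weighted_deriv (\<lambda>w. c * A w) ^^ k) \<psi> z = c ^ k * (weighted_deriv A ^^ k) \<psi> z"
  using assms(4)
proof (induction k arbitrary: z)
  case (Suc k)
  have "(weighted_deriv (\<lambda>w. c * A w) ^^ Suc k) \<psi> z
      = weighted_deriv (\<lambda>w. c * A w) (\<lambda>w. c ^ k * (weighted_deriv A ^^ k) \<psi> w) z"
    using weighted_deriv_cong_open[OF assms(1) Suc.prems Suc.IH] by simp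
  also have "\<dots> = c * A z * (c ^ k * deriv ((weighted_deriv A ^^ k) \<psi>) z)"
  proof -
    have "(weighted_deriv A ^^ k) \<psi> field_differentiable at z"
      using holomorphic_on_weighted_deriv_iterate[OF assms(1-3)] assms(1) Suc.prems
      by (rule holomorphic_on_imp_differentiable_at)
    then show ?thesis
      by (simp add: weighted_deriv_def deriv_cmult)
  qed
  also have "\<dots> = c ^ Suc k * (weighted_deriv A ^^ Suc k) \<psi> z"
    by (simp add: weighted_deriv_def)
  finally show ?case .
qed simp

definition real_on_circle :: "complex set \<Rightarrow> (complex \<Rightarrow> complex) \<Rightarrow> bool" where
  "real_on_circle W f \<longleftrightarrow> f holomorphic_on W \<and> (\<forall>G\<in>W. cmod G = 1 \<longrightarrow> Im (f G) = 0)"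

text \<open>At \<open>G = e^(i t)\<close> this is the derivative of \<open>t \<mapsto> f (e^(i t))\<close>.\<close>

definition angular_deriv :: "(complex \<Rightarrow> complex) \<Rightarrow> complex \<Rightarrow> complex" where
  "angular_deriv f G = \<i> * G * deriv f G"

lemma Im_angular_deriv_eq_0:
  assumes W: "open W" and f: "real_on_circle W f" and G: "G \<in> W" "cmod G = 1"
  shows "Im (angular_deriv f G) = 0"
proof -
  define t0 where "t0 = Arg G"
  have G_eq: "G = exp (\<i> * of_real t0)"
    using G(2) cis_Arg[of G] by (force simp: t0_def sgn_div_norm cis_conv_exp)
  have "((\<lambda>s. f (exp (\<i> * s))) has_field_derivative deriv f G * (G * \<i>)) (at (of_real t0))"
  proof (rule DERIV_chain2[where f = f])
    show "(f has_field_derivative deriv f G) (at (exp (\<i> * of_real t0)))"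
      using f W G unfolding G_eq real_on_circle_def by (blast intro: holomorphic_derivI)
    show "((\<lambda>s. exp (\<i> * s)) has_field_derivative G * \<i>) (at (of_real t0))"
      unfolding G_eq by (rule derivative_eq_intros refl)+ simp
  qed
  then have deriv_Im: "((\<lambda>t. Im (f (exp (\<i> * of_real t)))) has_field_derivative Im (deriv f G * (G * \<i>))) (at t0)"
    by (intro has_field_derivative_Im has_vector_derivative_real_field)
  have "open {t::real. exp (\<i> * of_real t) \<in> W}"
    using continuous_open_vimage[OF W, of "\<lambda>t::real. exp (\<i> * of_real t)"] by (simp add: vimage_def)
  then obtain d where "d > 0" and d: "ball t0 d \<subseteq> {t::real. exp (\<i> * of_real t) \<in> W}"
    using G G_eq by (metis mem_Collect_eq openE)
  have "Im (deriv f G * (G * \<i>)) = 0"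
  proof (rule DERIV_local_const[OF deriv_Im \<open>d > 0\<close>], intro allI impI)
    fix y :: real assume "\<bar>t0 - y\<bar> < d"
    then have "exp (\<i> * of_real y) \<in> W"
      using d by (auto simp: dist_real_def)
    then show "Im (f (exp (\<i> * of_real t0))) = Im (f (exp (\<i> * of_real y)))"
      using f G G_eq by (simp add: real_on_circle_def)
  qed
  then show ?thesis
    by (simp add: angular_deriv_def mult_ac)
qed

lemma real_on_circle_angular_deriv:
  assumes "open W" "real_on_circle W f"
  shows "real_on_circle W (angular_deriv f)"
  using assms Im_angular_deriv_eq_0[OF assms]
  unfolding real_on_circle_def angular_deriv_def[abs_def]
  by (auto intro!: holomorphic_intros)

lemma real_on_circle_mult:
  "real_on_circle W f \<Longrightarrow> real_on_circle W g \<Longrightarrow> real_on_circle W (\<lambda>z. f z * g z)"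
  unfolding real_on_circle_def by (auto intro: holomorphic_on_mult)

lemma real_on_circle_add:
  "real_on_circle W f \<Longrightarrow> real_on_circle W g \<Longrightarrow> real_on_circle W (\<lambda>z. f z + g z)"
  unfolding real_on_circle_def by (auto intro: holomorphic_on_add)

lemma real_on_circle_inverse:
  "real_on_circle W f \<Longrightarrow> (\<And>z. z \<in> W \<Longrightarrow> f z \<noteq> 0) \<Longrightarrow> real_on_circle W (\<lambda>z. inverse (f z))"
  unfolding real_on_circle_def by (auto intro: holomorphic_on_inverse)

fun equiv_coeff :: "(complex \<Rightarrow> complex) \<Rightarrow> nat \<Rightarrow> nat \<Rightarrow> complex \<Rightarrow> complex" where
  "equiv_coeff \<rho> 0 k = (if k = 0 then (\<lambda>G. inverse (\<rho> G ^ 2)) else (\<lambda>_. 0))"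
| "equiv_coeff \<rho> (Suc n) k = (\<lambda>G. \<rho> G * (angular_deriv (equiv_coeff \<rho> n k) G +
      (if k = 0 then 0 else equiv_coeff \<rho> n (k - 1) G)))"

lemma angular_deriv_zero [simp]: "angular_deriv (\<lambda>_. 0) = (\<lambda>_. 0)"
  by (simp add: angular_deriv_def[abs_def])

lemma equiv_coeff_eq_0: "n < k \<Longrightarrow> equiv_coeff \<rho> n k = (\<lambda>_. 0)"
  by (induction n arbitrary: k) auto

lemma equiv_coeff_diag:
  assumes "\<rho> G \<noteq> 0"
  shows "equiv_coeff \<rho> n n G = \<rho> G powi (int n - 2)"
proof (induction n)
  case 0
  then show ?case by (simp add: power_int_minus)
next
  case (Suc n)
  then have "equiv_coeff \<rho> (Suc n) (Suc n) G = \<rho> G * \<rho> G powi (int n - 2)"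
    by (simp add: equiv_coeff_eq_0)
  also have "\<dots> = \<rho> G powi (int (Suc n) - 2)"
    using power_int_add_1[of "\<rho> G" "int n - 2"] assms by (simp add: mult.commute add.commute)
  finally show ?case .
qed

lemma real_on_circle_equiv_coeff:
  assumes "open W" "real_on_circle W \<rho>" "\<And>G. G \<in> W \<Longrightarrow> \<rho> G \<noteq> 0"
  shows "real_on_circle W (equiv_coeff \<rho> n k)"
proof (induction n arbitrary: k)
  case 0
  have "real_on_circle W (\<lambda>G. inverse (\<rho> G ^ 2))"
    unfolding power2_eq_square using assms(2,3)
    by (intro real_on_circle_inverse real_on_circle_mult) auto
  then show ?case
    by (simp add: real_on_circle_def)
next
  case (Suc n)
  have "real_on_circle W (\<lambda>G. if k = 0 then 0 else equiv_coeff \<rho> n (k - 1) G)"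
    using Suc.IH by (cases "k = 0") (simp_all add: real_on_circle_def)
  then show ?case
    using Suc.IH real_on_circle_angular_deriv[OF assms(1)] assms(2)
    by (simp add: real_on_circle_mult real_on_circle_add)
qed

lemma weighted_deriv_comp_mult:
  assumes "open U" "open W" "g holomorphic_on U" "z \<in> U" "g z \<in> W"
    and "c holomorphic_on W" "Q holomorphic_on U"
    and "A z * deriv g z = \<i> * g z" "At z = \<rho> (g z) * A z"
  shows "weighted_deriv At (\<lambda>w. c (g w) * Q w) z
    = \<rho> (g z) * (c (g z) * weighted_deriv A Q z + angular_deriv c (g z) * Q z)"
proof -
  have "(c has_field_derivative deriv c (g z)) (at (g z))"
    using assms(6,2,5) by (rule holomorphic_derivI)
  moreover have "(g has_field_derivative deriv g z) (at z)"
    using assms(3,1,4) by (rule holomorphic_derivI)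
  ultimately have "((\<lambda>w. c (g w)) has_field_derivative deriv c (g z) * deriv g z) (at z)"
    by (rule DERIV_chain2)
  moreover have "(Q has_field_derivative deriv Q z) (at z)"
    using assms(7,1,4) by (rule holomorphic_derivI)
  ultimately have "deriv (\<lambda>w. c (g w) * Q w) z
      = c (g z) * deriv Q z + deriv c (g z) * deriv g z * Q z"
    by (intro DERIV_imp_deriv) (auto intro!: derivative_eq_intros)
  then show ?thesis
    using assms(8,9)
    by (simp add: weighted_deriv_def angular_deriv_def algebra_simps)
qed

lemma weighted_deriv_sum:
  assumes "\<And>i. f i field_differentiable at z"
  shows "weighted_deriv A (\<lambda>w. \<Sum>i\<in>I. f i w) z = (\<Sum>i\<in>I. weighted_deriv A (f i) z)"
  using assms by (simp add: weighted_deriv_def sum_distrib_left)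

lemma sum_equiv_coeff_Suc:
  "(\<Sum>k\<le>n. \<rho> G * (equiv_coeff \<rho> n k G * Q (Suc k) + angular_deriv (equiv_coeff \<rho> n k) G * Q k))
    = (\<Sum>k\<le>Suc n. equiv_coeff \<rho> (Suc n) k G * Q k)"
proof -
  have "(\<Sum>k\<le>Suc n. equiv_coeff \<rho> (Suc n) k G * Q k)
      = (\<Sum>k\<le>Suc n. \<rho> G * angular_deriv (equiv_coeff \<rho> n k) G * Q k)
        + (\<Sum>k\<le>Suc n. \<rho> G * (if k = 0 then 0 else equiv_coeff \<rho> n (k - 1) G) * Q k)"
    by (simp add: sum.distrib[symmetric] algebra_simps)
  also have "(\<Sum>k\<le>Suc n. \<rho> G * angular_deriv (equiv_coeff \<rho> n k) G * Q k)
      = (\<Sum>k\<le>n. \<rho> G * angular_deriv (equiv_coeff \<rho> n k) G * Q k)"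
    by (simp add: equiv_coeff_eq_0)
  also have "(\<Sum>k\<le>Suc n. \<rho> G * (if k = 0 then 0 else equiv_coeff \<rho> n (k - 1) G) * Q k)
      = (\<Sum>k\<le>n. \<rho> G * equiv_coeff \<rho> n k G * Q (Suc k))"
    by (subst sum.atMost_Suc_shift) simp
  finally show ?thesis
    by (simp add: sum.distrib algebra_simps)
qed

lemma weighted_deriv_iterate_expansion:
  assumes U: "open U" and W: "open W" and g: "g holomorphic_on U"
    and gW: "\<And>z. z \<in> U \<Longrightarrow> g z \<in> W"
    and \<rho>: "real_on_circle W \<rho>" "\<And>G. G \<in> W \<Longrightarrow> \<rho> G \<noteq> 0"
    and A: "A holomorphic_on U" "\<And>z. z \<in> U \<Longrightarrow> A z * deriv g z = \<i> * g z"
    and At: "\<And>z. z \<in> U \<Longrightarrow> At z = \<rho> (g z) * A z"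
    and \<phi>: "\<phi> holomorphic_on U"
    and \<phi>t: "\<And>z. z \<in> U \<Longrightarrow> \<phi>t z = inverse (\<rho> (g z) ^ 2) * \<phi> z"
    and z: "z \<in> U"
  shows "(weighted_deriv At ^^ n) \<phi>t z
    = (\<Sum>k\<le>n. equiv_coeff \<rho> n k (g z) * (weighted_deriv A ^^ k) \<phi> z)"
  using z
proof (induction n arbitrary: z)
  case 0
  then show ?case by (simp add: \<phi>t)
next
  case (Suc n)
  define Q where "Q k = (weighted_deriv A ^^ k) \<phi>" for k
  have Q: "Q k holomorphic_on U" for k
    unfolding Q_def by (rule holomorphic_on_weighted_deriv_iterate[OF U A(1) \<phi>])
  have coeff: "equiv_coeff \<rho> n k holomorphic_on W" for k
    using real_on_circle_equiv_coeff[OF W \<rho>] by (simp add: real_on_circle_def)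
  have "(\<lambda>w. equiv_coeff \<rho> n k (g w) * Q k w) field_differentiable at z" for k
  proof (rule field_differentiable_mult)
    show "(\<lambda>w. equiv_coeff \<rho> n k (g w)) field_differentiable at z"
      using field_differentiable_compose[of g z "equiv_coeff \<rho> n k"]
        holomorphic_on_imp_differentiable_at[OF g U Suc.prems]
        holomorphic_on_imp_differentiable_at[OF coeff W gW[OF Suc.prems]]
      by (simp add: o_def)
    show "Q k field_differentiable at z"
      using Q U Suc.prems by (rule holomorphic_on_imp_differentiable_at)
  qed
  moreover have "(weighted_deriv At ^^ Suc n) \<phi>t z
      = weighted_deriv At (\<lambda>w. \<Sum>k\<le>n. equiv_coeff \<rho> n k (g w) * Q k w) z"
    unfolding funpow.simps comp_def
    by (rule weighted_deriv_cong_open[OF U Suc.prems]) (simp add: Suc.IH Q_def)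
  ultimately have "(weighted_deriv At ^^ Suc n) \<phi>t z
      = (\<Sum>k\<le>n. weighted_deriv At (\<lambda>w. equiv_coeff \<rho> n k (g w) * Q k w) z)"
    by (simp add: weighted_deriv_sum)
  also have "\<dots> = (\<Sum>k\<le>n. \<rho> (g z) * (equiv_coeff \<rho> n k (g z) * Q (Suc k) z
      + angular_deriv (equiv_coeff \<rho> n k) (g z) * Q k z))"
    using weighted_deriv_comp_mult[where \<rho> = \<rho> and A = A and At = At, OF U W g Suc.prems gW[OF Suc.prems] coeff Q
        A(2)[OF Suc.prems] At[OF Suc.prems]]
    by (simp add: Q_def)
  also have "\<dots> = (\<Sum>k\<le>Suc n. equiv_coeff \<rho> (Suc n) k (g z) * Q k z)"
    by (rule sum_equiv_coeff_Suc)
  finally show ?case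
    by (simp add: Q_def)
qed

section \<open>Change of Weierstrass data\<close>

definition equiv_factor :: "complex \<Rightarrow> complex \<Rightarrow> complex \<Rightarrow> complex" where
  "equiv_factor a b G = (a * G + b) * (cnj b * G + cnj a) / G"

definition equiv_factor_domain :: "complex \<Rightarrow> complex \<Rightarrow> complex set" where
  "equiv_factor_domain a b = {G. G \<noteq> 0 \<and> a * G + b \<noteq> 0 \<and> cnj b * G + cnj a \<noteq> 0}"

lemma open_equiv_factor_domain: "open (equiv_factor_domain a b)"
  unfolding equiv_factor_domain_def
  by (simp add: Collect_conj_eq open_Int open_Collect_neq continuous_intros)

lemma equiv_factor_nonzero: "G \<in> equiv_factor_domain a b \<Longrightarrow> equiv_factor a b G \<noteq> 0"
  by (simp add: equiv_factor_domain_def equiv_factor_def)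

lemma unimodular_pair_eq: "(cmod a)\<^sup>2 - (cmod b)\<^sup>2 = 1 \<Longrightarrow> a * cnj a - b * cnj b = 1"
  by (metis complex_norm_square of_real_1 of_real_diff)

lemma affine_nonzero_on_circle:
  assumes "(cmod a)\<^sup>2 - (cmod b)\<^sup>2 = 1" "cmod G = 1"
  shows "a * G + b \<noteq> 0" "cnj b * G + cnj a \<noteq> 0"
proof -
  show "a * G + b \<noteq> 0"
  proof
    assume "a * G + b = 0"
    then have "b = - (a * G)"
      by (simp add: add_eq_0_iff)
    then have "cmod b = cmod a"
      using assms(2) by (simp add: norm_mult)
    then show False using assms(1) by simp
  qed
  show "cnj b * G + cnj a \<noteq> 0"
  proof
    assume "cnj b * G + cnj a = 0"
    then have "cmod a = cmod b"
      using assms(2) by (metis complex_mod_cnj norm_minus_cancel norm_mult mult_1_right add_eq_0_iff)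
    then show False using assms(1) by simp
  qed
qed

lemma circle_subset_equiv_factor_domain:
  "(cmod a)\<^sup>2 - (cmod b)\<^sup>2 = 1 \<Longrightarrow> cmod G = 1 \<Longrightarrow> G \<in> equiv_factor_domain a b"
  using affine_nonzero_on_circle[of a b G] by (auto simp: equiv_factor_domain_def)

lemma equiv_factor_on_circle:
  assumes "cmod G = 1"
  shows "equiv_factor a b G = of_real ((cmod (a * G + b))\<^sup>2)"
proof -
  have "cnj b * G + cnj a = G * cnj (a * G + b)"
    using complex_norm_square[of G] assms by (simp add: algebra_simps)
  then have "equiv_factor a b G = (a * G + b) * cnj (a * G + b)"
    using assms by (auto simp: equiv_factor_def)
  then show ?thesis
    using complex_norm_square[of "a * G + b"] by simp
qed

lemma real_on_circle_equiv_factor: "real_on_circle (equiv_factor_domain a b) (equiv_factor a b)"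
  unfolding real_on_circle_def equiv_factor_def[abs_def] equiv_factor_domain_def
  by (auto intro!: holomorphic_intros simp: equiv_factor_on_circle[unfolded equiv_factor_def])

lemma equiv_g_has_field_derivative:
  assumes "(g has_field_derivative g') (at z)" "cnj b * g z + cnj a \<noteq> 0"
    and "(cmod a)\<^sup>2 - (cmod b)\<^sup>2 = 1"
  shows "(equiv_g a b g has_field_derivative g' / (cnj b * g z + cnj a)\<^sup>2) (at z)"
proof -
  have "((\<lambda>z. (a * g z + b) / (cnj b * g z + cnj a)) has_field_derivative
      (a * g' * (cnj b * g z + cnj a) - (a * g z + b) * (cnj b * g')) / (cnj b * g z + cnj a)\<^sup>2) (at z)"
    using assms(1,2) by (auto intro!: derivative_eq_intros simp: power2_eq_square)
  moreover have "a * g' * (cnj b * g z + cnj a) - (a * g z + b) * (cnj b * g') = g' * (a * cnj a - b * cnj b)"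
    by (simp add: algebra_simps)
  ultimately show ?thesis
    using unimodular_pair_eq[OF assms(3)] by (simp add: equiv_g_def[abs_def])
qed

lemma equiv_char_weight:
  assumes "g field_differentiable at z" "g z \<noteq> 0" "cnj b * g z + cnj a \<noteq> 0"
    and "(cmod a)\<^sup>2 - (cmod b)\<^sup>2 = 1" "deriv g z \<noteq> 0"
  shows "equiv_g a b g z / deriv (equiv_g a b g) z = equiv_factor a b (g z) * (g z / deriv g z)"
proof -
  have "deriv (equiv_g a b g) z = deriv g z / (cnj b * g z + cnj a)\<^sup>2"
    using equiv_g_has_field_derivative[OF field_differentiable_derivI[OF assms(1)] assms(3,4)]
    by (rule DERIV_imp_deriv)
  moreover have "u / s / (d / s\<^sup>2) = u * s / g0 * (g0 / d)" if "s \<noteq> 0" "g0 \<noteq> 0" for u s d g0 :: complex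
    using that by (simp add: field_simps power2_eq_square)
  ultimately show ?thesis
    using assms(2,3) by (simp add: equiv_g_def equiv_factor_def)
qed

lemma equiv_char_phi:
  assumes "g field_differentiable at z" "g z \<noteq> 0" "cnj b * g z + cnj a \<noteq> 0"
    and "(cmod a)\<^sup>2 - (cmod b)\<^sup>2 = 1" "a * g z + b \<noteq> 0" "h z \<noteq> 0"
  shows "char_phi (equiv_g a b g) (equiv_h a b g h) z
    = inverse (equiv_factor a b (g z) ^ 2) * char_phi g h z"
proof -
  have "deriv (equiv_g a b g) z = deriv g z / (cnj b * g z + cnj a)\<^sup>2"
    using equiv_g_has_field_derivative[OF field_differentiable_derivI[OF assms(1)] assms(3,4)]
    by (rule DERIV_imp_deriv)
  moreover have "(d / s\<^sup>2) / ((u / s)\<^sup>2 * (s\<^sup>2 * h0))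
      = inverse ((u * s / g0)\<^sup>2) * (d / (g0\<^sup>2 * h0))"
    if "s \<noteq> 0" "g0 \<noteq> 0" "u \<noteq> 0" "h0 \<noteq> 0" for u s d g0 h0 :: complex
    using that by (simp add: field_simps power2_eq_square)
  ultimately show ?thesis
    using assms(2,3,5,6) by (simp add: char_phi_def equiv_g_def equiv_h_def equiv_factor_def)
qed

lemma char_iter_eq_weighted_deriv_iterate:
  assumes "open U" "(\<lambda>w. g w / deriv g w) holomorphic_on U" "char_phi g h holomorphic_on U" "z \<in> U"
  shows "char_iter g h k z
    = (weighted_deriv (\<lambda>w. \<i> * (g w / deriv g w)) ^^ k) (char_phi g h) z"
  using weighted_deriv_iterate_cmult[OF assms]
  by (simp add: char_iter_def char_V_eq_weighted_deriv)

lemma nondeg_singular_point_neighbourhood: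
  assumes "cmc1_face_data D g h" "nondeg_singular_point D g p"
    and "(cmod a)\<^sup>2 - (cmod b)\<^sup>2 = 1"
  obtains U where "open U" "p \<in> U" "g holomorphic_on U" "h holomorphic_on U"
    "\<And>z. z \<in> U \<Longrightarrow> g z \<noteq> 0 \<and> deriv g z \<noteq> 0 \<and> h z \<noteq> 0 \<and> a * g z + b \<noteq> 0 \<and> cnj b * g z + cnj a \<noteq> 0"
proof -
  have D: "open D" "h holomorphic_on D" "p \<in> D \<Longrightarrow> g analytic_on {p} \<Longrightarrow> h p \<noteq> 0"
    using assms(1) unfolding cmc1_face_data_def by blast+
  have p: "p \<in> D" "g analytic_on {p}" "cmod (g p) = 1" "deriv g p \<noteq> 0"
    using assms(2) unfolding nondeg_singular_point_def by blast+
  obtain e where "e > 0" and g_ball: "g holomorphic_on ball p e"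
    using p(2) unfolding analytic_on_def by blast
  define U0 where "U0 = ball p e \<inter> D"
  define N where "N z = g z * deriv g z * h z * (a * g z + b) * (cnj b * g z + cnj a)" for z
  have U0: "open U0" "g holomorphic_on U0" "h holomorphic_on U0"
    using D g_ball by (auto simp: U0_def intro: holomorphic_on_subset)
  then have "N holomorphic_on U0"
    unfolding N_def[abs_def] by (intro holomorphic_intros holomorphic_deriv)
  then have "open (U0 \<inter> N -` (- {0}))"
    using U0(1) by (intro continuous_open_preimage holomorphic_on_imp_continuous_on) auto
  moreover have "p \<in> U0 \<inter> N -` (- {0})"
    using p \<open>e > 0\<close> D(3) affine_nonzero_on_circle[OF assms(3) p(3)]
    by (auto simp: U0_def N_def)
  moreover have "g holomorphic_on U0 \<inter> N -` (- {0})" "h holomorphic_on U0 \<inter> N -` (- {0})"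
    using U0 by (auto intro: holomorphic_on_subset)
  ultimately show ?thesis
    using that[of "U0 \<inter> N -` (- {0})"] by (auto simp: N_def)
qed

lemma char_iter_equiv_expansion:
  assumes face: "cmc1_face_data D g h" and p: "nondeg_singular_point D g p"
    and ab: "(cmod a)\<^sup>2 - (cmod b)\<^sup>2 = 1"
  shows "char_iter (equiv_g a b g) (equiv_h a b g h) n p
    = (\<Sum>k\<le>n. equiv_coeff (equiv_factor a b) n k (g p) * char_iter g h k p)"
proof -
  obtain U where U: "open U" "p \<in> U" and g: "g holomorphic_on U" and h: "h holomorphic_on U"
    and nz: "\<And>z. z \<in> U \<Longrightarrow> g z \<noteq> 0 \<and> deriv g z \<noteq> 0 \<and> h z \<noteq> 0 \<and> a * g z + b \<noteq> 0 \<and> cnj b * g z + cnj a \<noteq> 0"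
    using nondeg_singular_point_neighbourhood[OF face p ab] by blast
  define W where "W = equiv_factor_domain a b"
  define \<rho> where "\<rho> = equiv_factor a b"
  define gt where "gt = equiv_g a b g"
  define ht where "ht = equiv_h a b g h"
  have W: "open W" "real_on_circle W \<rho>"
    unfolding W_def \<rho>_def by (rule open_equiv_factor_domain real_on_circle_equiv_factor)+
  have gW: "g z \<in> W" if "z \<in> U" for z
    using nz[OF that] by (simp add: W_def equiv_factor_domain_def)
  have \<rho>0: "\<rho> G \<noteq> 0" if "G \<in> W" for G
    using that unfolding W_def \<rho>_def by (rule equiv_factor_nonzero)
  have dg: "g field_differentiable at z" if "z \<in> U" for z
    using g U(1) that by (rule holomorphic_on_imp_differentiable_at)
  have weight: "gt z / deriv gt z = \<rho> (g z) * (g z / deriv g z)" if "z \<in> U" for z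
    using equiv_char_weight[OF dg[OF that] _ _ ab] nz[OF that] by (simp add: gt_def \<rho>_def)
  have phit: "char_phi gt ht z = inverse (\<rho> (g z) ^ 2) * char_phi g h z" if "z \<in> U" for z
    using equiv_char_phi[OF dg[OF that] _ _ ab] nz[OF that] by (simp add: gt_def ht_def \<rho>_def)
  have A: "(\<lambda>w. g w / deriv g w) holomorphic_on U"
    using g U(1) nz by (auto intro!: holomorphic_intros holomorphic_deriv)
  have \<phi>: "char_phi g h holomorphic_on U"
    unfolding char_phi_def[abs_def] using g h U(1) nz by (auto intro!: holomorphic_intros holomorphic_deriv)
  have \<rho>g: "(\<lambda>w. \<rho> (g w)) holomorphic_on U"
    using holomorphic_on_compose_gen[OF g, of \<rho> W] W gW by (auto simp: real_on_circle_def o_def)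
  have At: "(\<lambda>w. gt w / deriv gt w) holomorphic_on U"
    by (rule holomorphic_transform[OF holomorphic_on_mult[OF \<rho>g A]]) (simp add: weight)
  have \<phi>t: "char_phi gt ht holomorphic_on U"
  proof (rule holomorphic_transform)
    show "(\<lambda>z. inverse (\<rho> (g z) ^ 2) * char_phi g h z) holomorphic_on U"
      using \<rho>g \<phi> \<rho>0 gW by (intro holomorphic_on_mult holomorphic_on_inverse holomorphic_on_power) auto
  qed (simp add: phit)
  have "char_iter gt ht n p = (weighted_deriv (\<lambda>w. \<i> * (gt w / deriv gt w)) ^^ n) (char_phi gt ht) p"
    by (rule char_iter_eq_weighted_deriv_iterate[OF U(1) At \<phi>t U(2)])
  also have "\<dots> = (\<Sum>k\<le>n. equiv_coeff \<rho> n k (g p)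
      * (weighted_deriv (\<lambda>w. \<i> * (g w / deriv g w)) ^^ k) (char_phi g h) p)"
  proof (rule weighted_deriv_iterate_expansion[OF U(1) W(1) g gW W(2) \<rho>0 _ _ _ \<phi> _ U(2)])
    show "(\<lambda>w. \<i> * (g w / deriv g w)) holomorphic_on U"
      using A by (rule holomorphic_on_mult[OF holomorphic_on_const])
    show "\<i> * (g z / deriv g z) * deriv g z = \<i> * g z" if "z \<in> U" for z
      using nz[OF that] by simp
    show "\<i> * (gt z / deriv gt z) = \<rho> (g z) * (\<i> * (g z / deriv g z))" if "z \<in> U" for z
      using weight[OF that] by simp
  qed (simp_all add: phit)
  also have "\<dots> = (\<Sum>k\<le>n. equiv_coeff \<rho> n k (g p) * char_iter g h k p)"
    using char_iter_eq_weighted_deriv_iterate[OF U(1) A \<phi> U(2)] by simp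
  finally show ?thesis
    by (simp add: gt_def ht_def \<rho>_def)
qed

lemma equiv_coeff_equiv_factor_on_circle:
  assumes "(cmod a)\<^sup>2 - (cmod b)\<^sup>2 = 1" "cmod G = 1"
  shows "Im (equiv_coeff (equiv_factor a b) n k G) = 0"
    and "equiv_coeff (equiv_factor a b) n n G = of_real ((cmod (a * G + b))\<^sup>2) powi (int n - 2)"
proof -
  have G: "G \<in> equiv_factor_domain a b"
    using assms by (rule circle_subset_equiv_factor_domain)
  show "Im (equiv_coeff (equiv_factor a b) n k G) = 0"
    using real_on_circle_equiv_coeff[OF open_equiv_factor_domain real_on_circle_equiv_factor
        equiv_factor_nonzero] G assms(2)
    by (simp add: real_on_circle_def)
  show "equiv_coeff (equiv_factor a b) n n G = of_real ((cmod (a * G + b))\<^sup>2) powi (int n - 2)"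
    using equiv_coeff_diag[where \<rho> = "equiv_factor a b", OF equiv_factor_nonzero[OF G]] equiv_factor_on_circle[OF assms(2)] by simp
qed

lemma linear_sum_real_coeffs:
  fixes L :: "complex \<Rightarrow> real" and c q :: "nat \<Rightarrow> complex"
  assumes "linear L" "\<And>k. Im (c k) = 0" "\<forall>k<n. L (q k) = 0"
  shows "L (\<Sum>k\<le>n. c k * q k) = Re (c n) * L (q n)"
proof -
  have "c k * q k = Re (c k) *\<^sub>R q k" for k
    using assms(2)[of k] by (simp add: scaleR_conv_of_real complex_is_Real_iff)
  then have "L (\<Sum>k\<le>n. c k * q k) = (\<Sum>k\<le>n. Re (c k) * L (q k))"
    by (simp add: linear_sum[OF assms(1)] linear_scale[OF assms(1)])
  also have "\<dots> = (\<Sum>k<n. Re (c k) * L (q k)) + Re (c n) * L (q n)"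
    using sum.lessThan_Suc[of "\<lambda>k. Re (c k) * L (q k)" n] by (simp add: lessThan_Suc_atMost)
  also have "\<dots> = Re (c n) * L (q n)"
    using assms(3) by simp
  finally show ?thesis .
qed

lemma char_iter_equiv_transform:
  fixes L :: "complex \<Rightarrow> real"
  assumes "linear L" "cmc1_face_data D g h" "nondeg_singular_point D g p"
    and ab: "(cmod a)\<^sup>2 - (cmod b)\<^sup>2 = 1" and "\<forall>k<m. L (char_iter g h k p) = 0"
  shows "cmod (a * g p + b) powi (2 * (int m - 2)) * L (char_iter g h m p)
    = L (char_iter (equiv_g a b g) (equiv_h a b g h) m p)"
proof -
  have gp: "cmod (g p) = 1"
    using assms(3) by (simp add: nondeg_singular_point_def)
  have "L (char_iter (equiv_g a b g) (equiv_h a b g h) m p)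
      = Re (equiv_coeff (equiv_factor a b) m m (g p)) * L (char_iter g h m p)"
    unfolding char_iter_equiv_expansion[OF assms(2,3) ab]
    by (rule linear_sum_real_coeffs[OF assms(1) equiv_coeff_equiv_factor_on_circle(1)[OF ab gp] assms(5)])
  also have "Re (equiv_coeff (equiv_factor a b) m m (g p)) = cmod (a * g p + b) powi (2 * (int m - 2))"
    unfolding equiv_coeff_equiv_factor_on_circle(2)[OF ab gp]
    by (simp only: of_real_power_int[symmetric] Re_complex_of_real power_int_mult power_int_numeral)
  finally show ?thesis ..
qed

section \<open>Faces with \<open>g = exp\<close>\<close>

lemma weier_matrix_mult_entries:
  fixes F :: "complex^2^2"
  shows "(F ** weier_matrix g h z) $ i $ 1 = h z * (F $ i $ 1 * g z + F $ i $ 2)"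
    and "(F ** weier_matrix g h z) $ i $ 2 = - (h z * g z * (F $ i $ 1 * g z + F $ i $ 2))"
  by (simp_all add: matrix_matrix_mult_def sum_2 weier_matrix_def algebra_simps)

text \<open>The rows of the frame of the data \<open>(e^z, (x'' - x') / (e^z x) dz)\<close> are
  \<open>(u' / e^z, u - u')\<close> for solutions \<open>u\<close> of \<open>x (u'' - u') = (x'' - x') u\<close>.\<close>

lemma exp_frame_row_has_field_derivative:
  assumes "(u has_field_derivative u1 z) (at z)" "(u1 has_field_derivative u2) (at z)"
    and "x z \<noteq> 0" "x z * (u2 - u1 z) = y * u z"
  shows "((\<lambda>w. u1 w / exp w) has_field_derivative y / (exp z * x z) * u z) (at z)"
    and "((\<lambda>w. u w - u1 w) has_field_derivative - (y / (exp z * x z) * exp z * u z)) (at z)"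
proof -
  have "u2 - u1 z = y * u z / x z"
    using assms(3,4) by (simp add: field_simps)
  then show "((\<lambda>w. u1 w / exp w) has_field_derivative y / (exp z * x z) * u z) (at z)"
    using DERIV_divide[OF assms(2) DERIV_exp]
    by (rule_tac DERIV_cong) (auto simp: field_simps power2_eq_square exp_not_eq_zero)
  show "((\<lambda>w. u w - u1 w) has_field_derivative - (y / (exp z * x z) * exp z * u z)) (at z)"
    using DERIV_diff[OF assms(1,2)] \<open>u2 - u1 z = y * u z / x z\<close>
    by (rule_tac DERIV_cong) (auto simp: field_simps)
qed

lemma exp_second_solution:
  fixes x x1 x2 :: "complex \<Rightarrow> complex"
  assumes D: "open D" "convex D" and x: "\<And>z. z \<in> D \<Longrightarrow> x z \<noteq> 0"
    and dx: "\<And>z. z \<in> D \<Longrightarrow> (x has_field_derivative x1 z) (at z)"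
      "\<And>z. z \<in> D \<Longrightarrow> (x1 has_field_derivative x2 z) (at z)"
  obtains Y Y1 where "\<And>z. z \<in> D \<Longrightarrow> (Y has_field_derivative Y1 z) (at z)"
    "\<And>z. z \<in> D \<Longrightarrow> (Y1 has_field_derivative (x2 z * Y z - exp z) / x z) (at z)"
    "\<And>z. z \<in> D \<Longrightarrow> x1 z * Y z - x z * Y1 z = exp z"
proof -
  text \<open>Reduction of order: \<open>Y = x P\<close> with \<open>P' = - e^z / x^2\<close>.\<close>
  define f0 where "f0 z = - exp z / (x z)\<^sup>2" for z
  have "x holomorphic_on D"
    using dx(1) D(1) by (auto simp: holomorphic_on_open)
  then have "f0 holomorphic_on D"
    unfolding f0_def[abs_def] using x by (auto intro!: holomorphic_intros)
  then obtain P where P: "\<And>z. z \<in> D \<Longrightarrow> (P has_field_derivative f0 z) (at z within D)"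
    using holomorphic_convex_primitive'[OF D(2,1)] by blast
  have dP: "(P has_field_derivative - exp z / (x z)\<^sup>2) (at z)" if "z \<in> D" for z
    using P[OF that] at_within_open[OF that D(1)] by (simp add: f0_def)
  define Y1 where "Y1 z = x1 z * P z - exp z / x z" for z
  show ?thesis
  proof (rule that[of "\<lambda>z. x z * P z" Y1])
    fix z assume z: "z \<in> D"
    show "((\<lambda>w. x w * P w) has_field_derivative Y1 z) (at z)"
      using x[OF z]
      by (intro DERIV_cong[OF DERIV_mult[OF dx(1)[OF z] dP[OF z]]]) (simp add: Y1_def field_simps power2_eq_square)
    show "(Y1 has_field_derivative (x2 z * (x z * P z) - exp z) / x z) (at z)"
      unfolding Y1_def[abs_def] using x[OF z]
      by (intro DERIV_cong[OF DERIV_diff[OF DERIV_mult[OF dx(2)[OF z] dP[OF z]]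
            DERIV_divide[OF DERIV_exp dx(1)[OF z] x[OF z]]]]) (simp add: field_simps power2_eq_square)
    show "x1 z * (x z * P z) - x z * Y1 z = exp z"
      using x[OF z] by (simp add: Y1_def field_simps)
  qed
qed

lemma exp_frame_exists:
  assumes D: "open D" "convex D" and x: "x holomorphic_on D" "\<And>z. z \<in> D \<Longrightarrow> x z \<noteq> 0"
  defines "h \<equiv> \<lambda>z. (deriv (deriv x) z - deriv x z) / (exp z * x z)"
  shows "\<exists>F :: complex \<Rightarrow> complex^2^2. (\<forall>z\<in>D. det (F z) = 1) \<and>
    (\<forall>i j. (\<lambda>w. F w $ i $ j) holomorphic_on D) \<and>
    (\<forall>z\<in>D. \<forall>i j. ((\<lambda>w. F w $ i $ j) has_field_derivative (F z ** weier_matrix exp h z) $ i $ j) (at z))"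
proof -
  define x1 where "x1 = deriv x"
  define x2 where "x2 = deriv x1"
  have "x1 holomorphic_on D"
    unfolding x1_def using x(1) D(1) by (rule holomorphic_deriv)
  then have dx: "(x has_field_derivative x1 z) (at z)" "(x1 has_field_derivative x2 z) (at z)"
    if "z \<in> D" for z
    using x(1) D(1) that unfolding x1_def x2_def by (auto intro: holomorphic_derivI)
  obtain Y Y1 where dY: "\<And>z. z \<in> D \<Longrightarrow> (Y has_field_derivative Y1 z) (at z)"
    "\<And>z. z \<in> D \<Longrightarrow> (Y1 has_field_derivative (x2 z * Y z - exp z) / x z) (at z)"
    and wronskian: "\<And>z. z \<in> D \<Longrightarrow> x1 z * Y z - x z * Y1 z = exp z"
    using exp_second_solution[OF D x(2) dx] by blast
  define F :: "complex \<Rightarrow> complex^2^2" where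
    "F z = (\<chi> i j. if i = 1 then (if j = 1 then x1 z / exp z else x z - x1 z)
                    else (if j = 1 then Y1 z / exp z else Y z - Y1 z))" for z
  have F_entries: "F z $ 1 $ 1 = x1 z / exp z" "F z $ 1 $ 2 = x z - x1 z"
    "F z $ 2 $ 1 = Y1 z / exp z" "F z $ 2 $ 2 = Y z - Y1 z" for z
    by (simp_all add: F_def)
  have h_eq: "h z = (x2 z - x1 z) / (exp z * x z)" for z
    by (simp add: h_def x1_def x2_def)
  have F_deriv: "\<forall>i j. ((\<lambda>w. F w $ i $ j) has_field_derivative (F z ** weier_matrix exp h z) $ i $ j) (at z)"
    if z: "z \<in> D" for z
  proof -
    have "x z * (x2 z - x1 z) = (x2 z - x1 z) * x z"
      by (simp add: algebra_simps)
    from exp_frame_row_has_field_derivative[where x = x and y = "x2 z - x1 z", OF dx[OF z] x(2)[OF z] this]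
    have row1: "((\<lambda>w. F w $ 1 $ 1) has_field_derivative h z * x z) (at z)"
      "((\<lambda>w. F w $ 1 $ 2) has_field_derivative - (h z * exp z * x z)) (at z)"
      by (simp_all only: F_entries h_eq)
    have "x z * ((x2 z * Y z - exp z) / x z - Y1 z) = (x2 z - x1 z) * Y z"
      using x(2)[OF z] wronskian[OF z] by (simp add: field_simps)
    from exp_frame_row_has_field_derivative[where x = x and y = "x2 z - x1 z", OF dY[OF z] x(2)[OF z] this]
    have row2: "((\<lambda>w. F w $ 2 $ 1) has_field_derivative h z * Y z) (at z)"
      "((\<lambda>w. F w $ 2 $ 2) has_field_derivative - (h z * exp z * Y z)) (at z)"
      by (simp_all only: F_entries h_eq)
    have "F z $ 1 $ 1 * exp z + F z $ 1 $ 2 = x z" "F z $ 2 $ 1 * exp z + F z $ 2 $ 2 = Y z"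
      by (simp_all add: F_entries)
    with row1 row2 show ?thesis
      unfolding forall_2 weier_matrix_mult_entries by simp
  qed
  moreover have "\<forall>i j. (\<lambda>w. F w $ i $ j) holomorphic_on D"
    using F_deriv D(1) by (auto simp: holomorphic_on_open)
  moreover have "det (F z) = 1" if "z \<in> D" for z
  proof -
    have "det (F z) = (x1 z * Y z - x z * Y1 z) / exp z"
      by (simp add: det_2 F_entries diff_divide_distrib algebra_simps)
    then show ?thesis
      using wronskian[OF that] by simp
  qed
  ultimately show ?thesis
    by blast
qed

lemma analytic_on_exp: "exp analytic_on S"
  using analytic_on_open[of UNIV exp] holomorphic_on_exp analytic_on_subset by blast

lemma cmc1_face_data_exp:
  assumes D: "open D" "convex D" "z0 \<in> D" "Re z0 \<noteq> 0"
    and x: "x holomorphic_on D" "\<And>z. z \<in> D \<Longrightarrow> x z \<noteq> 0"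
    and y: "\<And>z. z \<in> D \<Longrightarrow> deriv (deriv x) z \<noteq> deriv x z"
  shows "cmc1_face_data D exp (\<lambda>z. (deriv (deriv x) z - deriv x z) / (exp z * x z))"
proof -
  have "(\<lambda>z. (deriv (deriv x) z - deriv x z) / (exp z * x z)) holomorphic_on D"
    using x D(1) by (auto intro!: holomorphic_intros holomorphic_deriv)
  moreover have "\<exists>z\<in>D. is_pole exp z \<or> cmod (exp z) \<noteq> 1"
    using D(3,4) by auto
  ultimately show ?thesis
    unfolding cmc1_face_data_def
    using D(1-3) exp_frame_exists[OF D(1,2) x] convex_connected[OF D(2)] x(2) y
      analytic_on_imp_meromorphic_on[OF analytic_on_exp] analytic_at_imp_no_pole[OF analytic_on_exp]
    by (auto simp: analytic_on_exp)
qed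

lemma char_phi_exp:
  assumes "x z \<noteq> 0"
  shows "char_phi exp (\<lambda>z. (deriv (deriv x) z - deriv x z) / (exp z * x z)) z
    = x z / (deriv (deriv x) z - deriv x z)"
  using assms by (simp add: char_phi_def DERIV_imp_deriv[OF DERIV_exp] power2_eq_square exp_not_eq_zero)

lemma higher_deriv_power_mult_at_0:
  fixes E :: "complex \<Rightarrow> complex"
  assumes S: "open S" "0 \<in> S" and E: "E holomorphic_on S" and km: "k \<le> m"
  shows "(deriv ^^ k) (\<lambda>z. z ^ m * E z) 0 = (if k = m then fact m * E 0 else 0)"
proof -
  have power: "(deriv ^^ i) (\<lambda>w. w ^ m) 0 = (if i = m then fact m else 0)" if "i \<le> m" for i
    using higher_deriv_power[where z = 0 and w = 0 and j = i and n = m] that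
    by (auto simp: pochhammer_fact)
  have "(deriv ^^ k) (\<lambda>z. z ^ m * E z) 0 =
      (\<Sum>i = 0..k. of_nat (k choose i) * (deriv ^^ i) (\<lambda>w. w ^ m) 0 * (deriv ^^ (k - i)) E 0)"
    by (rule higher_deriv_mult[OF _ E S]) (intro holomorphic_intros)
  also have "\<dots> = (\<Sum>i = 0..k. if i = m then fact m * E 0 else 0)"
    using km by (intro sum.cong) (auto simp: power)
  also have "\<dots> = (if k = m then fact m * E 0 else 0)"
    using km by simp
  finally show ?thesis .
qed

lemma char_iter_exp_at_0:
  assumes "open D" "0 \<in> D" "E holomorphic_on D" "\<And>z. z \<in> D \<Longrightarrow> char_phi exp h z = c + z ^ m * E z"
    and "k \<le> m"
  shows "char_iter exp h k 0 = \<i> ^ k * ((if k = 0 then c else 0) + (if k = m then fact m * E 0 else 0))"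
proof -
  have "char_V exp = deriv"
    by (intro ext) (simp add: char_V_def DERIV_imp_deriv[OF DERIV_exp])
  then have "char_iter exp h k 0 = \<i> ^ k * (deriv ^^ k) (\<lambda>z. c + z ^ m * E z) 0"
    using eventually_nhds_in_open[OF assms(1,2)]
    by (auto simp: char_iter_def intro!: higher_deriv_cong_ev elim!: eventually_mono assms(4))
  also have "(deriv ^^ k) (\<lambda>z. c + z ^ m * E z) 0 = (deriv ^^ k) (\<lambda>z. c) 0 + (deriv ^^ k) (\<lambda>z. z ^ m * E z) 0"
    using assms(1-3) by (intro higher_deriv_add) (auto intro!: holomorphic_intros)
  finally show ?thesis
    using higher_deriv_power_mult_at_0[OF assms(1-3,5)] by simp
qed

lemma exp_face_near_0:
  fixes x :: "complex \<Rightarrow> complex"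
  assumes x: "x holomorphic_on UNIV" "x 0 \<noteq> 0" "deriv (deriv x) 0 \<noteq> deriv x 0"
  obtains D where "open D" "0 \<in> D"
    "cmc1_face_data D exp (\<lambda>z. (deriv (deriv x) z - deriv x z) / (exp z * x z))"
    "nondeg_singular_point D exp 0" "\<And>z. z \<in> D \<Longrightarrow> x z \<noteq> 0 \<and> deriv (deriv x) z \<noteq> deriv x z"
proof -
  define S where "S = {z. x z \<noteq> 0} \<inter> {z. deriv (deriv x) z - deriv x z \<noteq> 0}"
  have "deriv x holomorphic_on UNIV" "deriv (deriv x) holomorphic_on UNIV"
    using x(1) by (auto intro: holomorphic_deriv)
  then have "continuous_on UNIV x" "continuous_on UNIV (\<lambda>z. deriv (deriv x) z - deriv x z)"
    using x(1) by (auto intro!: holomorphic_on_imp_continuous_on holomorphic_on_diff)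
  then have "open S"
    unfolding S_def by (intro open_Int open_Collect_neq continuous_on_const)
  moreover have "0 \<in> S"
    using x(2,3) by (simp add: S_def)
  ultimately obtain r where "r > 0" and r: "ball 0 r \<subseteq> S"
    by (meson openE)
  then have xy: "x z \<noteq> 0 \<and> deriv (deriv x) z \<noteq> deriv x z" if "z \<in> ball 0 r" for z
    using that by (auto simp: S_def)
  have "deriv exp (0::complex) = 1"
    using DERIV_imp_deriv[OF DERIV_exp, of "0::complex"] by simp
  then have "nondeg_singular_point (ball 0 r) exp 0"
    unfolding nondeg_singular_point_def using \<open>r > 0\<close> analytic_on_exp[of "{0}"] by simp
  moreover have "cmc1_face_data (ball 0 r) exp (\<lambda>z. (deriv (deriv x) z - deriv x z) / (exp z * x z))"
  proof (rule cmc1_face_data_exp)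
    show "of_real (r / 2) \<in> ball (0::complex) r" "Re (of_real (r / 2)) \<noteq> 0"
      using \<open>r > 0\<close> by auto
    show "x holomorphic_on ball 0 r"
      using x(1) by (rule holomorphic_on_subset) simp
  qed (use xy in auto)
  ultimately show ?thesis
    using that[of "ball 0 r"] \<open>r > 0\<close> xy by simp
qed

lemma exp_face_with_prescribed_char_iter:
  assumes m: "m \<ge> 1" and \<mu>: "\<nu>\<^sup>2 - \<nu> \<noteq> 0"
  shows "\<exists>D h. cmc1_face_data D exp h \<and> nondeg_singular_point D exp 0 \<and>
    (\<forall>k<m. char_iter exp h k 0 = (if k = 0 then 1 / (\<nu>\<^sup>2 - \<nu>) else 0)) \<and>
    char_iter exp h m 0 = t"
proof -
  define \<mu> where "\<mu> = \<nu>\<^sup>2 - \<nu>"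
  define N :: complex where "N = of_nat (m + 1) * of_nat (m + 2)"
  have "N \<noteq> 0"
    by (simp add: N_def del: of_nat_Suc)
  define \<gamma> where "\<gamma> = - t * \<mu>\<^sup>2 / (\<i> ^ m * fact m * N)"
  define x where "x z = exp (\<nu> * z) + \<gamma> * z ^ (m + 2)" for z
  define x1 where "x1 z = \<nu> * exp (\<nu> * z) + \<gamma> * of_nat (m + 2) * z ^ (m + 1)" for z
  define x2 where "x2 z = \<nu>\<^sup>2 * exp (\<nu> * z) + \<gamma> * N * z ^ m" for z
  have "(x has_field_derivative x1 z) (at z)" for z
    unfolding x_def[abs_def] x1_def
    by (rule derivative_eq_intros refl)+ (simp add: algebra_simps)
  then have x1_eq: "deriv x = x1"
    by (intro ext DERIV_imp_deriv)
  have "(x1 has_field_derivative x2 z) (at z)" for z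
    unfolding x1_def[abs_def] x2_def N_def
    by (rule derivative_eq_intros refl)+ (simp add: algebra_simps power2_eq_square)
  then have x2_eq: "deriv x1 = x2"
    by (intro ext DERIV_imp_deriv)
  define y where "y z = x2 z - x1 z" for z
  have "y 0 = \<mu>"
    using m by (simp add: y_def x1_def x2_def \<mu>_def)
  then have "y 0 \<noteq> 0"
    using \<mu> by (simp add: \<mu>_def)
  then have x_deriv_0: "deriv (deriv x) 0 \<noteq> deriv x 0"
    by (simp add: x1_eq x2_eq y_def)
  have x_holo: "x holomorphic_on UNIV" and x_0: "x 0 \<noteq> 0"
    unfolding x_def[abs_def] by (auto intro!: holomorphic_intros)
  obtain D where D: "open D" "0 \<in> D"
    and face: "cmc1_face_data D exp (\<lambda>z. (x2 z - x1 z) / (exp z * x z))"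
    and nondeg: "nondeg_singular_point D exp 0" and xy: "\<And>z. z \<in> D \<Longrightarrow> x z \<noteq> 0 \<and> x2 z \<noteq> x1 z"
    by (rule exp_face_near_0[OF x_holo x_0 x_deriv_0, unfolded x1_eq x2_eq]) iprover
  define h where "h z = (x2 z - x1 z) / (exp z * x z)" for z
  have y_nz: "y z \<noteq> 0" if "z \<in> D" for z
    using xy[OF that] by (simp add: y_def)
  define E where "E z = \<gamma> * (\<mu> * z\<^sup>2 - N + of_nat (m + 2) * z) / (\<mu> * y z)" for z
  have \<phi>: "char_phi exp h z = 1 / \<mu> + z ^ m * E z" if "z \<in> D" for z
  proof -
    have "\<mu> * x z - y z = \<gamma> * z ^ m * (\<mu> * z\<^sup>2 - N + of_nat (m + 2) * z)"
      by (simp add: \<mu>_def x_def y_def x1_def x2_def N_def algebra_simps power_add power2_eq_square)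
    then show ?thesis
      using char_phi_exp[of x z] xy[OF that] y_nz[OF that] \<mu>
      by (simp add: h_def[abs_def] x1_eq x2_eq E_def \<mu>_def[symmetric] field_simps flip: y_def)
  qed
  have E_holo: "E holomorphic_on D"
    unfolding E_def[abs_def] y_def x1_def x2_def
    using y_nz \<mu> by (auto intro!: holomorphic_intros simp: \<mu>_def y_def x1_def x2_def)
  have "fact m * E 0 = - \<gamma> * N * fact m / \<mu>\<^sup>2"
    using \<open>y 0 = \<mu>\<close> \<mu> unfolding \<mu>_def[symmetric] by (simp add: E_def power2_eq_square field_simps)
  also have "\<dots> = t / \<i> ^ m"
    using \<mu> \<open>N \<noteq> 0\<close> unfolding \<mu>_def[symmetric] by (simp add: \<gamma>_def field_simps)
  finally have "char_iter exp h m 0 = t"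
    using char_iter_exp_at_0[OF D E_holo \<phi>, of m] m by simp
  moreover have "char_iter exp h k 0 = (if k = 0 then 1 / \<mu> else 0)" if "k < m" for k
    using char_iter_exp_at_0[OF D E_holo \<phi>, of k] that by simp
  ultimately show ?thesis
    using face nondeg unfolding \<mu>_def h_def[abs_def] by blast
qed

lemma equiv_invariance_fails:
  fixes L :: "complex \<Rightarrow> real"
  assumes L: "linear L" and m: "m \<ge> 1" "m \<noteq> 2"
    and \<nu>: "\<nu>\<^sup>2 - \<nu> \<noteq> 0" "L (1 / (\<nu>\<^sup>2 - \<nu>)) = 0" and t: "L t \<noteq> 0"
  shows "\<not> (\<forall>D g h p a b.
      cmc1_face_data D g h \<and> nondeg_singular_point D g p \<and> (cmod a)\<^sup>2 - (cmod b)\<^sup>2 = 1 \<and>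
      (\<forall>k<m. L (char_iter g h k p) = 0) \<longrightarrow>
      L (char_iter g h m p) = L (char_iter (equiv_g a b g) (equiv_h a b g h) m p))"
    (is "\<not> ?invariant")
proof
  assume invariant: ?invariant
  obtain D h where face: "cmc1_face_data D exp h" and p: "nondeg_singular_point D exp 0"
    and low: "\<forall>k<m. char_iter exp h k 0 = (if k = 0 then 1 / (\<nu>\<^sup>2 - \<nu>) else 0)"
    and top: "char_iter exp h m 0 = t"
    using exp_face_with_prescribed_char_iter[OF m(1) \<nu>(1)] by blast
  define a where "a = complex_of_real (sqrt 2)"
  have ab: "(cmod a)\<^sup>2 - (cmod 1)\<^sup>2 = 1"
    by (simp add: a_def)
  have low': "\<forall>k<m. L (char_iter exp h k 0) = 0"
    using low \<nu>(2) linear_0[OF L] by simp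
  have "cmod (a * exp 0 + 1) powi (2 * (int m - 2)) * L t = L t"
    using char_iter_equiv_transform[OF L face p ab low'] invariant face p ab low' top by metis
  then have "(sqrt 2 + 1) powi (2 * (int m - 2)) = 1"
    using t by (simp add: a_def norm_of_real)
  moreover have "2 * (int m - 2) \<noteq> 0"
    using m by simp
  ultimately show False
    using power_int_strict_increasing[of "2 * (int m - 2)" 0 "sqrt 2 + 1"]
      power_int_strict_increasing[of 0 "2 * (int m - 2)" "sqrt 2 + 1"]
    by (cases "2 * (int m - 2) < 0") auto
qed

lemma equiv_invariance_iff:
  fixes L :: "complex \<Rightarrow> real"
  assumes "linear L" "m > 0" "\<nu>\<^sup>2 - \<nu> \<noteq> 0" "L (1 / (\<nu>\<^sup>2 - \<nu>)) = 0" "L t \<noteq> 0"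
  shows "(\<forall>D g h p a b.
      cmc1_face_data D g h \<and> nondeg_singular_point D g p \<and> (cmod a)\<^sup>2 - (cmod b)\<^sup>2 = 1 \<and>
      (\<forall>k<m. L (char_iter g h k p) = 0) \<longrightarrow>
      L (char_iter g h m p) = L (char_iter (equiv_g a b g) (equiv_h a b g h) m p))
    \<longleftrightarrow> m = 2"
proof (cases "m = 2")
  case True
  then show ?thesis
    using char_iter_equiv_transform[OF assms(1), where m = 2] by auto
next
  case False
  then show ?thesis
    using equiv_invariance_fails[OF assms(1) _ False assms(3-5)] assms(2) by simp
qed

lemma char_V_twice_Re_invariant:
  assumes "cmc1_face_data D g h" "nondeg_singular_point D g p" "(cmod a)\<^sup>2 - (cmod b)\<^sup>2 = 1"
    and "Re (char_phi g h p) = 0" "Im (char_V g (char_phi g h) p) = 0"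
  shows "Re ((char_V g ^^ 2) (char_phi g h) p)
    = Re ((char_V (equiv_g a b g) ^^ 2) (char_phi (equiv_g a b g) (equiv_h a b g h)) p)"
proof -
  have "\<forall>k<2. Re (char_iter g h k p) = 0"
    using assms(4,5) by (auto simp: char_iter_def less_2_cases_iff)
  from char_iter_equiv_transform[OF bounded_linear_Re[THEN bounded_linear.linear] assms(1-3) this]
  show ?thesis
    by (simp add: char_iter_def)
qed

lemma char_V_twice_Im_invariant:
  assumes "cmc1_face_data D g h" "nondeg_singular_point D g p" "(cmod a)\<^sup>2 - (cmod b)\<^sup>2 = 1"
    and "Im (char_phi g h p) = 0" "Re (char_V g (char_phi g h) p) = 0"
  shows "Im ((char_V g ^^ 2) (char_phi g h) p)
    = Im ((char_V (equiv_g a b g) ^^ 2) (char_phi (equiv_g a b g) (equiv_h a b g h)) p)"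
proof -
  have "\<forall>k<2. Im (char_iter g h k p) = 0"
    using assms(4,5) by (auto simp: char_iter_def less_2_cases_iff)
  from char_iter_equiv_transform[OF bounded_linear_Im[THEN bounded_linear.linear] assms(1-3) this]
  show ?thesis
    by (simp add: char_iter_def)
qed

theorem theorem3p3:
  fixes m :: nat
  assumes "m > 0"
  shows
   "(\<forall>D g h p a b.
       cmc1_face_data D g h \<and> nondeg_singular_point D g p \<and>
       (cmod a)^2 - (cmod b)^2 = 1 \<and>
       (\<forall>k<m. Re (char_iter g h k p) = 0) \<longrightarrow>
       cmod (a * g p + b) powi (2 * (int m - 2)) * Re (char_iter g h m p)
         = Re (char_iter (equiv_g a b g) (equiv_h a b g h) m p))
  \<and> ((\<forall>D g h p a b.
       cmc1_face_data D g h \<and> nondeg_singular_point D g p \<and>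
       (cmod a)^2 - (cmod b)^2 = 1 \<and>
       (\<forall>k<m. Re (char_iter g h k p) = 0) \<longrightarrow>
       Re (char_iter g h m p) = Re (char_iter (equiv_g a b g) (equiv_h a b g h) m p))
     \<longleftrightarrow> m = 2)
  \<and> (\<forall>D g h p a b.
       cmc1_face_data D g h \<and> nondeg_singular_point D g p \<and>
       (cmod a)^2 - (cmod b)^2 = 1 \<and>
       (\<forall>k<m. Im (char_iter g h k p) = 0) \<longrightarrow>
       cmod (a * g p + b) powi (2 * (int m - 2)) * Im (char_iter g h m p)
         = Im (char_iter (equiv_g a b g) (equiv_h a b g h) m p))
  \<and> ((\<forall>D g h p a b.
       cmc1_face_data D g h \<and> nondeg_singular_point D g p \<and>
       (cmod a)^2 - (cmod b)^2 = 1 \<and>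
       (\<forall>k<m. Im (char_iter g h k p) = 0) \<longrightarrow>
       Im (char_iter g h m p) = Im (char_iter (equiv_g a b g) (equiv_h a b g h) m p))
     \<longleftrightarrow> m = 2)
  \<and> (\<forall>D g h p a b.
       cmc1_face_data D g h \<and> nondeg_singular_point D g p \<and>
       (cmod a)^2 - (cmod b)^2 = 1 \<and>
       Im (char_phi g h p) = 0 \<and> Re (char_V g (char_phi g h) p) = 0 \<longrightarrow>
       Im (((char_V g) ^^ 2) (char_phi g h) p)
         = Im (((char_V (equiv_g a b g)) ^^ 2) (char_phi (equiv_g a b g) (equiv_h a b g h)) p))
  \<and> (\<forall>D g h p a b.
       cmc1_face_data D g h \<and> nondeg_singular_point D g p \<and>
       (cmod a)^2 - (cmod b)^2 = 1 \<and>
       Re (char_phi g h p) = 0 \<and> Im (char_V g (char_phi g h) p) = 0 \<longrightarrow>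
       Re (((char_V g) ^^ 2) (char_phi g h) p)
         = Re (((char_V (equiv_g a b g)) ^^ 2) (char_phi (equiv_g a b g) (equiv_h a b g h)) p))"
proof -
  have Re: "linear Re" and Im: "linear Im"
    by (simp_all add: bounded_linear_Re bounded_linear_Im bounded_linear.linear)
  define \<nu> where "\<nu> = Complex (4/3) (2/3)"
  have "\<nu>\<^sup>2 - \<nu> = Complex 0 (10/9)"
    by (simp add: \<nu>_def power2_eq_square Complex_eq algebra_simps)
  then have \<nu>: "\<nu>\<^sup>2 - \<nu> \<noteq> 0" "Re (1 / (\<nu>\<^sup>2 - \<nu>)) = 0"
    by (simp_all add: Re_divide complex_eq_iff)
  have two: "(2::complex)\<^sup>2 - 2 \<noteq> 0" "Im (1 / ((2::complex)\<^sup>2 - 2)) = 0"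
    by (simp_all add: power2_eq_square)
  have "Re 1 \<noteq> 0" "Im \<i> \<noteq> 0"
    by simp_all
  note Re_iff = equiv_invariance_iff[OF Re assms \<nu> this(1)]
    and Im_iff = equiv_invariance_iff[OF Im assms two this(2)]
  show ?thesis
    by (intro conjI Re_iff Im_iff allI impI; elim conjE;
        rule char_iter_equiv_transform[OF Re] char_iter_equiv_transform[OF Im]
          char_V_twice_Re_invariant char_V_twice_Im_invariant; assumption)
qed

end
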